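(* Let $N\ge 2$ be an integer and $\tau>0$. For $t\in\{0,\tau,2\tau,\dots\}$ let $u_j^t=u(j,t)$, $j=0,\dots,N$, be defined by prescribed initial values $u(j,0)$, the Dirichlet boundary condition $u_0^t=u_N^t=0$ for all $t$, and the iteration, for $j=1,\dots,N-1$, $$u_j^{t+\tau}=u_j^t+\frac{u_j^tu_{j-1}^t}{2}\bigl(u_j^t+u_{j-1}^t-1\bigr)\bigl(u_{j-1}^t-u_j^t\bigr)+\frac{u_j^tu_{j+1}^t}{2}\bigl(u_j^t+u_{j+1}^t-1\bigr)\bigl(u_{j+1}^t-u_j^t\bigr).$$ Suppose $$\tfrac12\le u(1,0)\le u(2,0)\le\cdots\le u(N-1,0)\le 1.$$ Then for all $t\in\{\tau,2\tau,\dots\}$, $$\tfrac12\le u(1,t)\le u(2,t)\le\cdots\le u(N-1,t)\le 1.$$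
   Context: Aggregation–diffusion lattice model on the grid points $x_j=j/N$ with time step $\tau$. *)

theory Defs
  imports Complex_Main
begin

end

theory Submission
  imports Defs
begin

(* The profile v_1 <= ... <= v_(N-1) with values in [1/2, 1] is an invariant of
   one step w_j = v_j + flux v_j v_(j-1) + flux v_j v_(j+1). For x + y >= 1,
   flux x y has the sign of y - x, and it vanishes towards a boundary zero; so v_1
   can only gain and v_(N-1) only lose mass. For neighbours v_j <= v_(j+1) the mutual
   exchange multiplies their gap by 1 - v_j v_(j+1) (v_j + v_(j+1) - 1) >= 0, while
   the outer fluxes only widen it. *)

definition flux :: "real \<Rightarrow> real \<Rightarrow> real" where
  "flux x y = x * y / 2 * (x + y - 1) * (y - x)"

definition ordered_profile :: "nat \<Rightarrow> (nat \<Rightarrow> real) \<Rightarrow> bool" where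
  "ordered_profile N v \<longleftrightarrow>
     1 / 2 \<le> v 1 \<and> (\<forall>j. 1 \<le> j \<and> j < N - 1 \<longrightarrow> v j \<le> v (j + 1)) \<and> v (N - 1) \<le> 1"

lemma flux_zero_right [simp]: "flux x 0 = 0"
  by (simp add: flux_def)

lemma flux_nonneg:
  assumes "0 \<le> x" "0 \<le> y" "1 \<le> x + y" "x \<le> y"
  shows "0 \<le> flux x y"
  using assms unfolding flux_def by (intro mult_nonneg_nonneg) auto

lemma flux_nonpos:
  assumes "0 \<le> x" "0 \<le> y" "1 \<le> x + y" "y \<le> x"
  shows "flux x y \<le> 0"
proof -
  have "0 \<le> x * y / 2 * (x + y - 1) * (x - y)"
    using assms by (intro mult_nonneg_nonneg) auto
  then show ?thesis
    unfolding flux_def by (simp add: algebra_simps)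
qed

lemma flux_exchange_le:
  assumes "0 \<le> x" "x \<le> y" "y \<le> 1"
  shows "flux x y - flux y x \<le> y - x"
proof -
  have exchange: "flux x y - flux y x = x * y * (x + y - 1) * (y - x)"
    unfolding flux_def by (simp add: field_simps)
  have "x * y * (x + y - 1) \<le> x * y"
    using assms by (intro mult_left_le) auto
  also have "x * y \<le> 1 * 1"
    using assms by (intro mult_mono) auto
  finally have "0 \<le> (1 - x * y * (x + y - 1)) * (y - x)"
    using assms by (intro mult_nonneg_nonneg) auto
  then show ?thesis
    unfolding exchange by (simp add: algebra_simps)
qed

lemma ordered_profile_mono:
  assumes "ordered_profile N v" "1 \<le> i" "i \<le> j" "j \<le> N - 1"
  shows "v i \<le> v j"
  using assms(3,4)
proof (induction j rule: dec_induct)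
  case base
  then show ?case by simp
next
  case (step n)
  then have "v n \<le> v (Suc n)"
    using assms(1,2) unfolding ordered_profile_def by auto
  with step show ?case by simp
qed

lemma ordered_profile_bounds:
  assumes "ordered_profile N v" "1 \<le> j" "j \<le> N - 1"
  shows "1 / 2 \<le> v j" "v j \<le> 1"
proof -
  have "v 1 \<le> v j" "v j \<le> v (N - 1)"
    using ordered_profile_mono[OF assms(1)] assms(2,3) by auto
  then show "1 / 2 \<le> v j" "v j \<le> 1"
    using assms(1) unfolding ordered_profile_def by auto
qed

lemma flux_left_nonpos:
  assumes v: "ordered_profile N v" and v0: "v 0 = 0" and j: "1 \<le> j" "j \<le> N - 1"
  shows "flux (v j) (v (j - 1)) \<le> 0"
proof (cases "j = 1")
  case True
  then show ?thesis using v0 by simp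
next
  case False
  then have "v (j - 1) \<le> v j" "1 / 2 \<le> v (j - 1)" "1 / 2 \<le> v j"
    using ordered_profile_mono[OF v, of "j - 1" j] ordered_profile_bounds[OF v] j by auto
  then show ?thesis by (intro flux_nonpos) auto
qed

lemma flux_right_nonneg:
  assumes v: "ordered_profile N v" and vN: "v N = 0" and j: "1 \<le> j" "j \<le> N - 1"
  shows "0 \<le> flux (v j) (v (j + 1))"
proof (cases "j = N - 1")
  case True
  then have "j + 1 = N" using j by simp
  then show ?thesis using vN by simp
next
  case False
  then have "v j \<le> v (j + 1)" "1 / 2 \<le> v j" "1 / 2 \<le> v (j + 1)"
    using ordered_profile_mono[OF v, of j "j + 1"] ordered_profile_bounds[OF v] j by auto
  then show ?thesis by (intro flux_nonneg) auto
qed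

lemma ordered_profile_step:
  assumes N2: "N \<ge> 2" and v: "ordered_profile N v" and v0: "v 0 = 0" and vN: "v N = 0"
    and w: "\<And>j. 1 \<le> j \<Longrightarrow> j \<le> N - 1 \<Longrightarrow>
              w j = v j + flux (v j) (v (j - 1)) + flux (v j) (v (j + 1))"
  shows "ordered_profile N w"
proof -
  have "1 / 2 \<le> w 1"
  proof -
    have "w 1 = v 1 + flux (v 1) (v (1 + 1))"
      using w[of 1] N2 v0 by simp
    moreover have "0 \<le> flux (v 1) (v (1 + 1))"
      using flux_right_nonneg[OF v vN, of 1] N2 by simp
    ultimately show ?thesis
      using v unfolding ordered_profile_def by simp
  qed
  moreover have "w (N - 1) \<le> 1"
  proof -
    have "w (N - 1) = v (N - 1) + flux (v (N - 1)) (v (N - 1 - 1))"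
      using w[of "N - 1"] N2 vN by simp
    moreover have "flux (v (N - 1)) (v (N - 1 - 1)) \<le> 0"
      using flux_left_nonpos[OF v v0, of "N - 1"] N2 by simp
    ultimately show ?thesis
      using v unfolding ordered_profile_def by simp
  qed
  moreover have "w j \<le> w (j + 1)" if j: "1 \<le> j" "j < N - 1" for j
  proof -
    have "w j = v j + flux (v j) (v (j - 1)) + flux (v j) (v (j + 1))"
      "w (j + 1) = v (j + 1) + flux (v (j + 1)) (v j) + flux (v (j + 1)) (v (j + 2))"
      using w[of j] w[of "j + 1"] j by simp_all
    moreover have "flux (v j) (v (j - 1)) \<le> 0" "0 \<le> flux (v (j + 1)) (v (j + 2))"
      using flux_left_nonpos[OF v v0, of j] flux_right_nonneg[OF v vN, of "j + 1"] j
      by simp_all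
    moreover have "flux (v j) (v (j + 1)) - flux (v (j + 1)) (v j) \<le> v (j + 1) - v j"
      using ordered_profile_bounds[OF v, of j] ordered_profile_bounds[OF v, of "j + 1"]
        ordered_profile_mono[OF v, of j "j + 1"] j
      by (intro flux_exchange_le) auto
    ultimately show ?thesis by linarith
  qed
  ultimately show ?thesis
    unfolding ordered_profile_def by blast
qed

theorem theorem3p4:
  fixes N :: nat and \<tau> :: real and u :: "nat \<Rightarrow> real \<Rightarrow> real"
  assumes N2: "N \<ge> 2"
    and tau_pos: "\<tau> > 0"
    and bc0: "\<And>k::nat. u 0 (real k * \<tau>) = 0"
    and bcN: "\<And>k::nat. u N (real k * \<tau>) = 0"
    and iter: "\<And>(k::nat) j. 1 \<le> j \<Longrightarrow> j \<le> N - 1 \<Longrightarrow>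
      u j (real k * \<tau> + \<tau>) =
        u j (real k * \<tau>)
        + u j (real k * \<tau>) * u (j - 1) (real k * \<tau>) / 2
            * (u j (real k * \<tau>) + u (j - 1) (real k * \<tau>) - 1)
            * (u (j - 1) (real k * \<tau>) - u j (real k * \<tau>))
        + u j (real k * \<tau>) * u (j + 1) (real k * \<tau>) / 2
            * (u j (real k * \<tau>) + u (j + 1) (real k * \<tau>) - 1)
            * (u (j + 1) (real k * \<tau>) - u j (real k * \<tau>))"
    and init_low: "1 / 2 \<le> u 1 0"
    and init_mono: "\<And>j. 1 \<le> j \<Longrightarrow> j < N - 1 \<Longrightarrow> u j 0 \<le> u (j + 1) 0"
    and init_up: "u (N - 1) 0 \<le> 1"
  shows "\<forall>k::nat. k \<ge> 1 \<longrightarrow>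
      1 / 2 \<le> u 1 (real k * \<tau>)
      \<and> (\<forall>j. 1 \<le> j \<and> j < N - 1 \<longrightarrow> u j (real k * \<tau>) \<le> u (j + 1) (real k * \<tau>))
      \<and> u (N - 1) (real k * \<tau>) \<le> 1"
proof -
  have "ordered_profile N (\<lambda>j. u j (real k * \<tau>))" for k
  proof (induction k)
    case 0
    then show ?case
      using init_low init_mono init_up unfolding ordered_profile_def by simp
  next
    case (Suc k)
    have "real (Suc k) * \<tau> = real k * \<tau> + \<tau>"
      by (simp add: algebra_simps)
    with Suc show ?case
      using ordered_profile_step[OF N2 Suc bc0[of k] bcN[of k]] iter[of _ k]
      by (simp add: flux_def)
  qed
  then show ?thesis
    unfolding ordered_profile_def by blast
qed

end
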